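(* Let $V$ be an $N$-dimensional vector space over $\mathbb{F}_q$ and $\nu\ge N$. Let $\overline{Pr}_\nu(V)$ be the set of linear-isometry classes of projective weight functions $\operatorname{wt}_{\mathcal{F}}$ on $V$ with $\mathcal{F}$ a spanning projective point family of cardinality $\nu$, and let $\overline{\mathrm{Gr}}_{\nu-N}(\mathbb{F}_q^\nu)_{d_H\ge3}$ be the set of Hamming-equivalence classes of $(\nu-N)$-dimensional subspaces of $\mathbb{F}_q^\nu$ with minimum Hamming distance at least $3$. Then the map $\Psi$ sending the class of $\operatorname{wt}_{\mathcal{F}}$ to the Hamming-equivalence class of the parent codes of $\mathcal{F}$ is a well-defined bijection $\overline{Pr}_\nu(V)\to\overline{\mathrm{Gr}}_{\nu-N}(\mathbb{F}_q^\nu)_{d_H\ge3}$, whose inverse sends the class of a subspace $P$ to the class of the quotient weight $\operatorname{wt}_{\mathrm{quot},\varphi_P}$, where $\varphi_P:\mathbb{F}_q^\nu\to V$ is any linear map with kernel $P$ and $\mathbb{F}_q^\nu$ carries the Hamming weight.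
   Context: A projective point family in $V$ is a set $\mathcal{F}$ of pairwise linearly independent nonzero vectors (distinct $1$-dimensional subspaces); it is spanning if $\langle\mathcal{F}\rangle=V$. Its projective weight is $\operatorname{wt}_{\mathcal{F}}(x)=\min(\{|I|:I\subseteq\mathcal{F},x\in\langle I\rangle\}\cup\{\infty\})$. A parent function of $\mathcal{F}$ (with $|\mathcal{F}|=\nu$) is a linear map $\varphi:\mathbb{F}_q^\nu\to V$ with $\{\langle\varphi(e_i)\rangle\}_{i=1}^\nu=\mathcal{F}$; its kernel is a parent code of $\mathcal{F}$. Two weight functions $\operatorname{wt}_1,\operatorname{wt}_2$ on $V$ are linearly isometric if $\operatorname{wt}_1=\operatorname{wt}_2\circ L$ for some $L\in\mathrm{GL}(V)$. Subspaces $C_1,C_2\le\mathbb{F}_q^\nu$ are Hamming equivalent if $L(C_1)=C_2$ for some linear Hamming-weight-preserving map $L$ (i.e. a permutation composed with an invertible diagonal matrix). Quotient weight: $\operatorname{wt}_{\mathrm{quot},\psi}(y)=\min\{\operatorname{wt}_H(w):w\in\psi^{-1}(y)\}$. *)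

theory Defs
  imports "HOL-Analysis.Analysis" "HOL-Library.Extended_Nat"
begin

text \<open>Ambient spaces: V = 'a^'n (dimension N = CARD('n)) and F_q^nu = 'a^'m
  (nu = CARD('m)) over a finite field 'a.  Weights take values in enat (infinity allowed).\<close>

definition lin_map :: "('a::field^'m \<Rightarrow> 'a^'n) \<Rightarrow> bool" where
  "lin_map f \<longleftrightarrow> Vector_Spaces.linear ((*s)) ((*s)) f"

definition proj_point_family :: "('a::field^'n) set \<Rightarrow> bool" where
  "proj_point_family F \<longleftrightarrow> finite F \<and> 0 \<notin> F \<and>
     (\<forall>u\<in>F. \<forall>v\<in>F. u \<noteq> v \<longrightarrow> vec.independent {u, v})"

definition spanning_ppf :: "('a::field^'n) set \<Rightarrow> bool" where
  "spanning_ppf F \<longleftrightarrow> proj_point_family F \<and> vec.span F = UNIV"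

definition proj_weight :: "('a::field^'n) set \<Rightarrow> 'a^'n \<Rightarrow> enat" where
  "proj_weight F x = (INF I \<in> {I. I \<subseteq> F \<and> x \<in> vec.span I}. enat (card I))"

definition parent_function :: "('a::field^'m \<Rightarrow> 'a^'n) \<Rightarrow> ('a^'n) set \<Rightarrow> bool" where
  "parent_function \<phi> F \<longleftrightarrow> lin_map \<phi> \<and>
     {vec.span {\<phi> (axis i 1)} | i. True} = {vec.span {v} | v. v \<in> F}"

definition ker_map :: "('a::field^'m \<Rightarrow> 'a^'n) \<Rightarrow> ('a^'m) set" where
  "ker_map \<phi> = {x. \<phi> x = 0}"

definition hamming_wt :: "'a::zero^'m \<Rightarrow> nat" where
  "hamming_wt x = card {i. x $ i \<noteq> 0}"

definition quot_weight :: "('a::field^'m \<Rightarrow> 'a^'n) \<Rightarrow> 'a^'n \<Rightarrow> enat" where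
  "quot_weight \<psi> y = (INF w \<in> {w. \<psi> w = y}. enat (hamming_wt w))"

definition lin_isometric :: "('a::field^'n \<Rightarrow> enat) \<Rightarrow> ('a^'n \<Rightarrow> enat) \<Rightarrow> bool" where
  "lin_isometric w1 w2 \<longleftrightarrow> (\<exists>L::'a^'n \<Rightarrow> 'a^'n. lin_map L \<and> bij L \<and> w1 = w2 \<circ> L)"

definition hamming_equiv :: "('a::field^'m) set \<Rightarrow> ('a^'m) set \<Rightarrow> bool" where
  "hamming_equiv C1 C2 \<longleftrightarrow> (\<exists>L::'a^'m \<Rightarrow> 'a^'m. lin_map L \<and>
      (\<forall>x. hamming_wt (L x) = hamming_wt x) \<and> L ` C1 = C2)"

definition Pr_set :: "nat \<Rightarrow> ('a::field^'n \<Rightarrow> enat) set" where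
  "Pr_set \<nu> = {proj_weight F | F. spanning_ppf F \<and> card F = \<nu>}"

definition Pr_class :: "nat \<Rightarrow> ('a::field^'n \<Rightarrow> enat) \<Rightarrow> ('a^'n \<Rightarrow> enat) set" where
  "Pr_class \<nu> w = {w' \<in> Pr_set \<nu>. lin_isometric w w'}"

definition Pr_bar :: "nat \<Rightarrow> ('a::field^'n \<Rightarrow> enat) set set" where
  "Pr_bar \<nu> = Pr_class \<nu> ` Pr_set \<nu>"

definition Gr_set :: "nat \<Rightarrow> ('a::field^'m) set set" where
  "Gr_set k = {P. vec.subspace P \<and> vec.dim P = k \<and>
                  (\<forall>x\<in>P. x \<noteq> 0 \<longrightarrow> hamming_wt x \<ge> 3)}"

definition Gr_class :: "nat \<Rightarrow> ('a::field^'m) set \<Rightarrow> ('a^'m) set set" where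
  "Gr_class k P = {P' \<in> Gr_set k. hamming_equiv P P'}"

definition Gr_bar :: "nat \<Rightarrow> ('a::field^'m) set set set" where
  "Gr_bar k = Gr_class k ` Gr_set k"

end

theory Submission
  imports Defs
begin

text \<open>Both sides are parametrised by the linear surjections \<phi> from F_q^nu onto V whose kernel
  has minimum Hamming weight at least 3.  This kernel condition says exactly that the images of
  the standard basis vectors are nonzero and span pairwise distinct lines, so these maps are
  precisely the parent functions of the spanning projective point families of cardinality nu,
  and the projective weight of such a family is the quotient weight of its parent function.  It
  remains to see that two such maps have linearly isometric quotient weights iff their kernels
  are Hamming equivalent.  A Hamming isometry carrying one kernel onto the other makes the
  second map factor through the first up to an automorphism of V.  Conversely, a linear
  isometry between quotient weights preserves the vectors of weight one, i.e. the nonzero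
  multiples of the images of basis vectors; so it permutes the lines of the two families, and
  this permutation together with the scalars is a Hamming isometry carrying one kernel onto the
  other.\<close>

lemma eq_related_Collect_iff:
  assumes "equivp R" "b \<in> S"
  shows "{y \<in> S. R a y} = {y \<in> S. R b y} \<longleftrightarrow> R a b"
proof
  assume eq: "{y \<in> S. R a y} = {y \<in> S. R b y}"
  have "b \<in> {y \<in> S. R b y}"
    using assms equivp_reflp by fastforce
  then show "R a b"
    using eq by blast
next
  assume "R a b"
  then have "R a = R b"
    using assms(1) unfolding equivp_def by blast
  then show "{y \<in> S. R a y} = {y \<in> S. R b y}"
    by simp
qed

lemma ex_bij_betw_induced:
  assumes "\<And>a b. a \<in> A \<Longrightarrow> b \<in> A \<Longrightarrow> f a = f b \<longleftrightarrow> g a = g b"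
  shows "\<exists>h. (\<forall>a\<in>A. h (f a) = g a) \<and> bij_betw h (f ` A) (g ` A)"
proof (intro exI conjI ballI)
  let ?h = "\<lambda>x. g (SOME a. a \<in> A \<and> f a = x)"
  show h: "?h (f a) = g a" if "a \<in> A" for a
  proof -
    have "(SOME b. b \<in> A \<and> f b = f a) \<in> A \<and> f (SOME b. b \<in> A \<and> f b = f a) = f a"
      using someI[of "\<lambda>b. b \<in> A \<and> f b = f a" a] that by blast
    then show ?thesis
      using assms that by blast
  qed
  have "inj_on ?h (f ` A)"
  proof (rule inj_onI, elim imageE)
    fix x y a b
    assume "?h x = ?h y" "a \<in> A" "x = f a" "b \<in> A" "y = f b"
    then show "x = y"
      using h assms by simp
  qed
  moreover have "?h ` f ` A = g ` A"
    unfolding image_image using h by (rule image_cong[OF refl])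
  ultimately show "bij_betw ?h (f ` A) (g ` A)"
    unfolding bij_betw_def by blast
qed

lemmas lin_map_0 = vec.linear_0[folded lin_map_def]
lemmas lin_map_add = vec.linear_add[folded lin_map_def]
lemmas lin_map_diff = vec.linear_diff[folded lin_map_def]
lemmas lin_map_scale = vec.linear_scale[folded lin_map_def]
lemmas lin_map_sum = vec.linear_sum[folded lin_map_def]
lemmas lin_map_span_image = vec.linear_span_image[folded lin_map_def]

lemma lin_map_compose: "lin_map f \<Longrightarrow> lin_map g \<Longrightarrow> lin_map (f \<circ> g)"
  unfolding lin_map_def by (rule Vector_Spaces.linear_compose)

lemma lin_map_id: "lin_map id"
  unfolding lin_map_def by (rule vec.linear_id)

lemma lin_map_matrix_vector_mult: "lin_map ((*v) A)"
  unfolding lin_map_def by (rule matrix_vector_mul_linear_gen)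

lemma lin_map_inv: "lin_map (L :: 'a::field^'n \<Rightarrow> 'a^'n) \<Longrightarrow> bij L \<Longrightarrow> lin_map (inv L)"
  unfolding lin_map_def by (simp add: vec.inj_linear_imp_inv_linear bij_is_inj)

lemma lin_map_inj_imp_bij: "lin_map (L :: 'a::field^'n \<Rightarrow> 'a^'n) \<Longrightarrow> inj L \<Longrightarrow> bij L"
  unfolding lin_map_def by (simp add: bij_def vec.linear_inj_imp_surj)

lemma lin_mapI:
  assumes "\<And>x y. f (x + y) = f x + f y" and "\<And>c x. f (c *s x) = c *s f x"
  shows "lin_map (f :: 'a::field^'m \<Rightarrow> 'a^'n)"
  unfolding lin_map_def by unfold_locales (use assms in auto)

lemma lin_map_axis:
  assumes "lin_map f"
  shows "f (axis i c) = c *s f (axis i (1::'a::field))"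
proof -
  have "axis i c = c *s axis i (1::'a)"
    by (simp add: vec_eq_iff axis_def)
  then show ?thesis
    using lin_map_scale[OF assms] by metis
qed

lemma lin_map_expand:
  assumes "lin_map f"
  shows "f x = (\<Sum>i\<in>UNIV. x $ i *s f (axis i (1::'a::field)))"
proof -
  have "f x = f (\<Sum>i\<in>UNIV. x $ i *s axis i 1)"
    by (simp add: basis_expansion)
  then show ?thesis
    by (simp add: lin_map_sum[OF assms] lin_map_scale[OF assms])
qed

lemma lin_map_eqI_axis:
  assumes "lin_map f" "lin_map g" "\<And>i. f (axis i 1) = g (axis i (1::'a::field))"
  shows "f = g"
proof
  fix x
  have "f x = (\<Sum>i\<in>UNIV. x $ i *s f (axis i 1))"
    using lin_map_expand[OF assms(1)] .
  also have "\<dots> = (\<Sum>i\<in>UNIV. x $ i *s g (axis i 1))"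
    by (simp only: assms(3))
  also have "\<dots> = g x"
    using lin_map_expand[OF assms(2)] by metis
  finally show "f x = g x" .
qed

lemma subspace_ker_map: "lin_map \<phi> \<Longrightarrow> vec.subspace (ker_map \<phi>)"
  unfolding lin_map_def ker_map_def by (rule vec.linear_subspace_kernel)

lemma subspace_range: "lin_map \<phi> \<Longrightarrow> vec.subspace (range \<phi>)"
  unfolding lin_map_def by (rule vec.linear_subspace_image[OF _ vec.subspace_UNIV])

lemma dim_ker_map_add_dim_range:
  fixes \<phi> :: "'a::field^'m \<Rightarrow> 'a^'n"
  assumes l: "lin_map \<phi>"
  shows "vec.dim (ker_map \<phi>) + vec.dim (range \<phi>) = CARD('m)"
proof -
  obtain g :: "'a^'n \<Rightarrow> 'a^'m" where g: "lin_map g" "\<And>v. v \<in> range \<phi> \<Longrightarrow> \<phi> (g v) = v"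
    using vec.linear_exists_right_inverse_on[of \<phi> UNIV] l unfolding lin_map_def by auto
  let ?K = "ker_map \<phi>" and ?G = "g ` range \<phi>"
  have sK: "vec.subspace ?K" and sG: "vec.subspace ?G"
    using subspace_ker_map[OF l] subspace_range[OF l] g(1) vec.linear_subspace_image
    unfolding lin_map_def by blast+
  have "x = (x - g (\<phi> x)) + g (\<phi> x) \<and> x - g (\<phi> x) \<in> ?K \<and> g (\<phi> x) \<in> ?G" for x
    using g(2) lin_map_diff[OF l, of x "g (\<phi> x)"] unfolding ker_map_def by simp
  then have sum: "{x + y |x y. x \<in> ?K \<and> y \<in> ?G} = UNIV"
    by blast
  have "x = 0" if "x \<in> ?K" "x \<in> ?G" for x
    using that g lin_map_0 unfolding ker_map_def by force
  then have int: "?K \<inter> ?G = {0}"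
    using sK sG vec.subspace_0 by blast
  have "inj_on g (vec.span (range \<phi>))"
    using g(2) subspace_range[OF l] by (metis inj_on_inverseI vec.span_eq_iff)
  then have "vec.dim ?G = vec.dim (range \<phi>)"
    using vec.dim_image_eq g(1) unfolding lin_map_def by blast
  moreover have "vec.dim (UNIV :: ('a^'m) set) + vec.dim ({0} :: ('a^'m) set) = vec.dim ?K + vec.dim ?G"
    using vec.dim_sums_Int[OF sK sG] unfolding sum int .
  ultimately show ?thesis
    by (simp add: card_cart_basis)
qed

lemma surj_iff_dim_ker_map:
  fixes \<phi> :: "'a::field^'m \<Rightarrow> 'a^'n"
  assumes "lin_map \<phi>" "CARD('n) \<le> CARD('m)"
  shows "surj \<phi> \<longleftrightarrow> vec.dim (ker_map \<phi>) = CARD('m) - CARD('n)"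
proof -
  have "surj \<phi> \<longleftrightarrow> vec.dim (range \<phi>) = vec.dim (UNIV :: ('a^'n) set)"
    using vec.subspace_dim_equal[OF subspace_range[OF assms(1)] vec.subspace_UNIV]
    by (metis subset_UNIV order_refl)
  then have "surj \<phi> \<longleftrightarrow> vec.dim (range \<phi>) = CARD('n)"
    by (simp only: vec.dim_UNIV card_cart_basis)
  then show ?thesis
    using dim_ker_map_add_dim_range[OF assms(1)] assms(2) by auto
qed

lemma ex_surj_lin_map_vanishing_on:
  fixes P :: "('a::field^'m) set"
  assumes "vec.dim P + CARD('n) = CARD('m)"
  shows "\<exists>\<phi> :: 'a^'m \<Rightarrow> 'a^'n. lin_map \<phi> \<and> surj \<phi> \<and> P \<subseteq> ker_map \<phi>"
proof -
  obtain B0 where B0: "B0 \<subseteq> P" "vec.independent B0" "P \<subseteq> vec.span B0" "card B0 = vec.dim P"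
    using vec.basis_exists[of P] by blast
  define B where "B = vec.extend_basis B0"
  have B: "B0 \<subseteq> B" "vec.independent B" "vec.span B = UNIV"
    unfolding B_def using B0(2) vec.extend_basis_superset vec.independent_extend_basis
      vec.span_extend_basis by auto
  have "finite B"
    using B(2) by (rule vec.finiteI_independent)
  have "card B = CARD('m)"
    using vec.basis_card_eq_dim[of B UNIV] B by (simp add: card_cart_basis)
  then have "card (B - B0) = CARD('n)"
    using card_Diff_subset[OF finite_subset[OF B(1) \<open>finite B\<close>] B(1)] B0(4) assms by simp
  then obtain h where h: "bij_betw h (B - B0) (cart_basis :: ('a^'n) set)"
    using finite_same_card_bij[of "B - B0" "cart_basis :: ('a^'n) set"] \<open>finite B\<close>
    by (auto simp: card_cart_basis finite_cart_basis)
  obtain \<phi> :: "'a^'m \<Rightarrow> 'a^'n" where \<phi>: "lin_map \<phi>" "\<And>x. x \<in> B \<Longrightarrow> \<phi> x = (if x \<in> B0 then 0 else h x)"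
    using vec.linear_independent_extend[OF B(2), of "\<lambda>x. if x \<in> B0 then 0 else h x"]
    unfolding lin_map_def by blast
  have "cart_basis \<subseteq> range \<phi>"
  proof
    fix v :: "'a^'n"
    assume "v \<in> cart_basis"
    then obtain b where "b \<in> B - B0" "v = h b"
      using bij_betw_imp_surj_on[OF h] by blast
    then show "v \<in> range \<phi>"
      using \<phi>(2)[of b] by (metis DiffE rangeI)
  qed
  then have "surj \<phi>"
    using vec.span_minimal[OF _ subspace_range[OF \<phi>(1)]] span_cart_basis by blast
  moreover have "B0 \<subseteq> ker_map \<phi>"
    using \<phi>(2) B(1) unfolding ker_map_def by auto
  then have "P \<subseteq> ker_map \<phi>"
    using B0(3) vec.span_minimal[OF _ subspace_ker_map[OF \<phi>(1)]] by blast
  ultimately show ?thesis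
    using \<phi>(1) by blast
qed

lemma ex_lin_map_ker_map_eq:
  fixes P :: "('a::field^'m) set"
  assumes le: "CARD('n) \<le> CARD('m)" and "vec.subspace P" and dP: "vec.dim P = CARD('m) - CARD('n)"
  shows "\<exists>\<phi> :: 'a^'m \<Rightarrow> 'a^'n. lin_map \<phi> \<and> surj \<phi> \<and> ker_map \<phi> = P"
proof -
  have "vec.dim P + CARD('n) = CARD('m)"
    using le dP by simp
  then obtain \<phi> :: "'a^'m \<Rightarrow> 'a^'n" where \<phi>: "lin_map \<phi>" "surj \<phi>" "P \<subseteq> ker_map \<phi>"
    using ex_surj_lin_map_vanishing_on by blast
  moreover have "vec.dim (ker_map \<phi>) = vec.dim P"
    using surj_iff_dim_ker_map[OF \<phi>(1) le] \<phi>(2) dP by simp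
  ultimately have "P = ker_map \<phi>"
    using vec.subspace_dim_equal[OF assms(2) subspace_ker_map[OF \<phi>(1)]] by simp
  then show ?thesis
    using \<phi> by blast
qed

lemma ex_lin_bij_factor_if_ker_map_eq:
  fixes \<phi>1 \<phi>2 :: "'a::field^'m \<Rightarrow> 'a^'n"
  assumes l1: "lin_map \<phi>1" and s1: "surj \<phi>1" and l2: "lin_map \<phi>2" and s2: "surj \<phi>2"
    and k: "ker_map \<phi>1 = ker_map \<phi>2"
  shows "\<exists>L. lin_map L \<and> bij L \<and> \<phi>2 = L \<circ> \<phi>1"
proof -
  obtain g where g: "lin_map g" "\<phi>1 \<circ> g = id"
    using vec.linear_surjective_right_inverse[OF l1[unfolded lin_map_def] s1]
    unfolding lin_map_def by blast
  have fibres: "\<phi>2 a = \<phi>2 b \<longleftrightarrow> \<phi>1 a = \<phi>1 b" for a b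
    using k lin_map_diff[OF l1, of a b] lin_map_diff[OF l2, of a b] unfolding ker_map_def
    by (metis (mono_tags) mem_Collect_eq right_minus_eq)
  have inv1: "\<phi>1 (g y) = y" for y
    using g(2) by (simp add: fun_eq_iff)
  let ?L = "\<phi>2 \<circ> g"
  have factor_at: "\<phi>2 (g (\<phi>1 x)) = \<phi>2 x" for x
    by (simp add: fibres inv1)
  then have factor: "\<phi>2 = ?L \<circ> \<phi>1"
    by (simp add: fun_eq_iff)
  moreover have "inj ?L"
    by (rule injI) (simp add: fibres inv1)
  moreover have "surj ?L"
    by (rule surjI[of _ "\<lambda>y. \<phi>1 (inv \<phi>2 y)"]) (simp add: factor_at surj_f_inv_f[OF s2])
  ultimately show ?thesis
    using lin_map_compose[OF l2 g(1)] bij_def by blast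
qed

lemma span_singleton_scale: "c \<noteq> 0 \<Longrightarrow> vec.span {c *s v} = vec.span {v :: 'a::field^'n}"
  unfolding vec.span_singleton
  by (auto simp: vector_smult_assoc intro: range_eqI[of _ _ "_ / c"])

lemma span_singleton_eq_if_mem:
  assumes "u \<noteq> 0" "u \<in> vec.span {v :: 'a::field^'n}"
  shows "vec.span {u} = vec.span {v}"
proof -
  obtain k where "u = k *s v"
    using assms(2) unfolding vec.span_singleton by blast
  moreover from this have "k \<noteq> 0"
    using assms(1) by auto
  ultimately show ?thesis
    by (simp add: span_singleton_scale)
qed

lemma independent_pair_iff_span_singleton_ne:
  fixes u v :: "'a::field^'n"
  assumes "u \<noteq> 0" "v \<noteq> 0" "u \<noteq> v"
  shows "vec.independent {u, v} \<longleftrightarrow> vec.span {u} \<noteq> vec.span {v}"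
proof -
  have "vec.independent {u, v} \<longleftrightarrow> u \<notin> vec.span {v}"
    using assms vec.independent_insert[of u "{v}"] vec.independent_insert[of v "{}"]
    by (simp add: vec.span_empty)
  also have "\<dots> \<longleftrightarrow> vec.span {u} \<noteq> vec.span {v}"
    using span_singleton_eq_if_mem[OF assms(1)] vec.span_base[of u "{u}"] by blast
  finally show ?thesis .
qed

lemma proj_point_family_inj_on_span_singleton:
  "proj_point_family F \<Longrightarrow> inj_on (\<lambda>v. vec.span {v}) F"
  unfolding proj_point_family_def
  by (metis (no_types, lifting) independent_pair_iff_span_singleton_ne inj_onI)

subsection \<open>Hamming weight\<close>

lemma hamming_wt_eq_0_iff: "hamming_wt x = 0 \<longleftrightarrow> x = 0"
  unfolding hamming_wt_def by (auto simp: vec_eq_iff)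

lemma hamming_wt_zero [simp]: "hamming_wt 0 = 0"
  by (simp add: hamming_wt_eq_0_iff)

lemma hamming_wt_axis: "c \<noteq> 0 \<Longrightarrow> hamming_wt (axis i c :: 'a::zero^'m) = 1"
proof -
  assume "c \<noteq> 0"
  then have "{k. (axis i c :: 'a^'m) $ k \<noteq> 0} = {i}"
    by (auto simp: axis_def)
  then show ?thesis
    unfolding hamming_wt_def by simp
qed

lemma hamming_wt_eq_1_iff:
  "hamming_wt (x :: 'a::zero^'m) = 1 \<longleftrightarrow> (\<exists>i c. c \<noteq> 0 \<and> x = axis i c)"
proof
  assume "hamming_wt x = 1"
  then obtain i where "{k. x $ k \<noteq> 0} = {i}"
    unfolding hamming_wt_def by (auto simp: card_Suc_eq)
  then show "\<exists>i c. c \<noteq> 0 \<and> x = axis i c"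
    by (intro exI[of _ i] exI[of _ "x $ i"]) (auto simp: vec_eq_iff axis_def)
qed (auto simp: hamming_wt_axis)

lemma hamming_wt_axis_add_axis_le: "hamming_wt (axis i a + axis j b :: 'a::monoid_add^'m) \<le> 2"
proof -
  have "card {k. (axis i a + axis j b :: 'a^'m) $ k \<noteq> 0} \<le> card {i, j}"
    by (intro card_mono) (auto simp: axis_def)
  also have "\<dots> \<le> 2"
    by (simp add: card_insert_le_m1)
  finally show ?thesis
    unfolding hamming_wt_def .
qed

lemma hamming_wt_le_2_cases:
  fixes x :: "'a::monoid_add^'m"
  assumes "x \<noteq> 0" "hamming_wt x \<le> 2"
  obtains i a where "a \<noteq> 0" "x = axis i a"
  | i j a b where "i \<noteq> j" "a \<noteq> 0" "b \<noteq> 0" "x = axis i a + axis j b"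
proof -
  have "hamming_wt x = 1 \<or> hamming_wt x = 2"
    using assms hamming_wt_eq_0_iff by fastforce
  then show thesis
  proof
    assume "hamming_wt x = 1"
    then show thesis
      using that(1) hamming_wt_eq_1_iff by metis
  next
    assume "hamming_wt x = 2"
    then obtain i j where S: "{k. x $ k \<noteq> 0} = {i, j}" "i \<noteq> j"
      unfolding hamming_wt_def card_2_iff by blast
    have supp: "x $ k \<noteq> 0 \<longleftrightarrow> k = i \<or> k = j" for k
      using S(1)[unfolded set_eq_iff, rule_format, of k] by simp
    then have "x = axis i (x $ i) + axis j (x $ j)"
      using S(2) by (auto simp: vec_eq_iff axis_def)
    then show thesis
      using that(2)[of i j "x $ i" "x $ j"] supp S(2) by blast
  qed
qed

definition hamming_isometry :: "('a::field^'m \<Rightarrow> 'a^'m) \<Rightarrow> bool" where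
  "hamming_isometry L \<longleftrightarrow> lin_map L \<and> (\<forall>x. hamming_wt (L x) = hamming_wt x)"

lemma hamming_equiv_iff: "hamming_equiv C1 C2 \<longleftrightarrow> (\<exists>L. hamming_isometry L \<and> L ` C1 = C2)"
  unfolding hamming_equiv_def hamming_isometry_def by (simp add: conj_assoc)

lemma hamming_isometry_bij:
  assumes "hamming_isometry L"
  shows "bij L"
proof -
  have l: "lin_map L" and wt: "\<And>x. hamming_wt (L x) = hamming_wt x"
    using assms unfolding hamming_isometry_def by auto
  have "inj L"
  proof (rule injI)
    fix x y
    assume "L x = L y"
    then have "L (x - y) = 0"
      by (simp add: lin_map_diff[OF l])
    then have "hamming_wt (x - y) = 0"
      using wt[of "x - y"] by simp
    then show "x = y"
      by (simp add: hamming_wt_eq_0_iff)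
  qed
  then show ?thesis
    using lin_map_inj_imp_bij[OF l] by blast
qed

lemma hamming_isometry_inv:
  assumes "hamming_isometry L"
  shows "hamming_isometry (inv L)"
proof -
  have b: "bij L"
    using hamming_isometry_bij[OF assms] .
  have "hamming_wt (inv L x) = hamming_wt (L (inv L x))" for x
    using assms unfolding hamming_isometry_def by simp
  then have "hamming_wt (inv L x) = hamming_wt x" for x
    using b by (simp add: bij_is_surj surj_f_inv_f)
  then show ?thesis
    using assms lin_map_inv[OF _ b] unfolding hamming_isometry_def by blast
qed

lemma hamming_isometry_compose: "hamming_isometry L \<Longrightarrow> hamming_isometry M \<Longrightarrow> hamming_isometry (L \<circ> M)"
  unfolding hamming_isometry_def by (simp add: lin_map_compose)

lemma equivp_hamming_equiv: "equivp (hamming_equiv :: ('a::field^'m) set \<Rightarrow> _)"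
proof (rule equivpI)
  show "reflp (hamming_equiv :: ('a^'m) set \<Rightarrow> _)"
    by (rule reflpI) (auto simp: hamming_equiv_iff hamming_isometry_def lin_map_id intro: exI[of _ id])
  show "symp (hamming_equiv :: ('a^'m) set \<Rightarrow> _)"
  proof (rule sympI)
    fix C1 C2 :: "('a^'m) set"
    assume "hamming_equiv C1 C2"
    then obtain L where L: "hamming_isometry L" "L ` C1 = C2"
      unfolding hamming_equiv_iff by blast
    then have "inv L ` C2 = C1"
      using bij_is_inj[OF hamming_isometry_bij[OF L(1)]] by (auto simp: image_inv_f_f)
    then show "hamming_equiv C2 C1"
      unfolding hamming_equiv_iff using hamming_isometry_inv[OF L(1)] by blast
  qed
  show "transp (hamming_equiv :: ('a^'m) set \<Rightarrow> _)"
  proof (rule transpI)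
    fix C1 C2 C3 :: "('a^'m) set"
    assume "hamming_equiv C1 C2" "hamming_equiv C2 C3"
    then obtain L M where "hamming_isometry L" "L ` C1 = C2" "hamming_isometry M" "M ` C2 = C3"
      unfolding hamming_equiv_iff by blast
    then show "hamming_equiv C1 C3"
      unfolding hamming_equiv_iff by (metis hamming_isometry_compose image_comp)
  qed
qed

definition monomial_map :: "('m \<Rightarrow> 'm) \<Rightarrow> ('m \<Rightarrow> 'a::field) \<Rightarrow> 'a^'m \<Rightarrow> 'a^'m" where
  "monomial_map \<sigma> c x = (\<chi> j. c (inv \<sigma> j) * x $ inv \<sigma> j)"

lemma monomial_map_axis:
  assumes "bij \<sigma>"
  shows "monomial_map \<sigma> c (axis i 1) = axis (\<sigma> i) (c i)"
proof -
  have "inv \<sigma> j = i \<longleftrightarrow> j = \<sigma> i" for j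
    using bij_inv_eq_iff[OF assms] by metis
  then show ?thesis
    using inv_f_f[OF bij_is_inj[OF assms]] by (auto simp: monomial_map_def vec_eq_iff axis_def)
qed

lemma hamming_isometry_monomial_map:
  assumes \<sigma>: "bij \<sigma>" and c: "\<And>i. c i \<noteq> 0"
  shows "hamming_isometry (monomial_map \<sigma> c)"
  unfolding hamming_isometry_def
proof
  show "lin_map (monomial_map \<sigma> c)"
    by (rule lin_mapI) (simp_all add: monomial_map_def vec_eq_iff algebra_simps)
  show "\<forall>x. hamming_wt (monomial_map \<sigma> c x) = hamming_wt x"
  proof
    fix x
    have "{j. monomial_map \<sigma> c x $ j \<noteq> 0} = inv \<sigma> -` {i. x $ i \<noteq> 0}"
      using c by (auto simp: monomial_map_def)
    also have "\<dots> = \<sigma> ` {i. x $ i \<noteq> 0}"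
      using bij_vimage_eq_inv_image[OF bij_imp_bij_inv[OF \<sigma>]] inv_inv_eq[OF \<sigma>] by metis
    finally show "hamming_wt (monomial_map \<sigma> c x) = hamming_wt x"
      unfolding hamming_wt_def using card_image[OF inj_on_subset[OF bij_is_inj[OF \<sigma>] subset_UNIV]]
      by simp
  qed
qed

subsection \<open>Quotient weights\<close>

lemma quot_weight_le: "\<phi> w = y \<Longrightarrow> quot_weight \<phi> y \<le> enat (hamming_wt w)"
  unfolding quot_weight_def by (rule INF_lower) simp

lemma quot_weight_attained:
  assumes "quot_weight \<phi> y \<noteq> \<infinity>"
  obtains w where "\<phi> w = y" "quot_weight \<phi> y = enat (hamming_wt w)"
proof -
  have "{w. \<phi> w = y} \<noteq> {}"
  proof
    assume empty: "{w. \<phi> w = y} = {}"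
    have "quot_weight \<phi> y = \<infinity>"
      unfolding quot_weight_def empty by (simp add: top_enat_def)
    then show False
      using assms by simp
  qed
  then obtain w0 where "\<phi> w0 = y"
    by blast
  then have "enat (hamming_wt w0) \<in> (\<lambda>w. enat (hamming_wt w)) ` {w. \<phi> w = y}"
    by blast
  then have "quot_weight \<phi> y \<in> (\<lambda>w. enat (hamming_wt w)) ` {w. \<phi> w = y}"
    unfolding quot_weight_def by (rule wellorder_InfI)
  then show thesis
    using that by blast
qed

lemma quot_weight_eq_0_iff:
  fixes \<phi> :: "'a::field^'m \<Rightarrow> 'a^'n"
  assumes l: "lin_map \<phi>"
  shows "quot_weight \<phi> y = 0 \<longleftrightarrow> y = 0"
proof
  assume 0: "quot_weight \<phi> y = 0"
  then have "quot_weight \<phi> y \<noteq> \<infinity>"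
    by simp
  then obtain w where w: "\<phi> w = y" "quot_weight \<phi> y = enat (hamming_wt w)"
    by (rule quot_weight_attained)
  then have "w = 0"
    using 0 by (simp add: zero_enat_def hamming_wt_eq_0_iff)
  then show "y = 0"
    using w(1) lin_map_0[OF l] by simp
next
  assume "y = 0"
  then have "\<phi> 0 = y"
    using lin_map_0[OF l] by simp
  then have "quot_weight \<phi> y \<le> enat (hamming_wt (0 :: 'a^'m))"
    by (rule quot_weight_le)
  then show "quot_weight \<phi> y = 0"
    by (simp add: zero_enat_def[symmetric])
qed

lemma quot_weight_eq_1_iff:
  assumes l: "lin_map \<phi>" and nz: "\<And>i. \<phi> (axis i 1) \<noteq> 0"
  shows "quot_weight \<phi> y = 1 \<longleftrightarrow> (\<exists>i c. c \<noteq> 0 \<and> y = \<phi> (axis i c))"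
proof
  assume 1: "quot_weight \<phi> y = 1"
  then have "quot_weight \<phi> y \<noteq> \<infinity>"
    by simp
  then obtain w where w: "\<phi> w = y" "quot_weight \<phi> y = enat (hamming_wt w)"
    by (rule quot_weight_attained)
  then have "hamming_wt w = 1"
    using 1 by (simp add: one_enat_def)
  then show "\<exists>i c. c \<noteq> 0 \<and> y = \<phi> (axis i c)"
    using w(1) hamming_wt_eq_1_iff[of w] by blast
next
  assume "\<exists>i c. c \<noteq> 0 \<and> y = \<phi> (axis i c)"
  then obtain i c where c: "c \<noteq> 0" and y: "y = \<phi> (axis i c)"
    by blast
  then have "quot_weight \<phi> y \<le> 1"
    using quot_weight_le[of \<phi> "axis i c" y] by (simp add: hamming_wt_axis one_enat_def)
  moreover have "quot_weight \<phi> y \<noteq> 0"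
    using c y nz lin_map_axis[OF l, of i c] by (simp add: quot_weight_eq_0_iff[OF l] vec.scale_eq_0_iff)
  ultimately show "quot_weight \<phi> y = 1"
    by (cases "quot_weight \<phi> y") (auto simp: one_enat_def zero_enat_def)
qed

lemma quot_weight_comp_inj: "inj L \<Longrightarrow> quot_weight (L \<circ> \<phi>) (L y) = quot_weight \<phi> y"
  unfolding quot_weight_def by (simp add: inj_eq)

lemma quot_weight_comp_hamming_isometry:
  assumes "hamming_isometry D"
  shows "quot_weight (\<phi> \<circ> D) = quot_weight \<phi>"
proof
  fix y
  have wt: "hamming_wt (D w) = hamming_wt w" for w
    using assms unfolding hamming_isometry_def by simp
  have preimage: "{w. \<phi> (D w) = y} = D -` {v. \<phi> v = y}"
    by auto
  have fibre: "D ` {w. \<phi> (D w) = y} = {v. \<phi> v = y}"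
    unfolding preimage using bij_is_surj[OF hamming_isometry_bij[OF assms]] by (rule surj_image_vimage_eq)
  have "(\<lambda>v. enat (hamming_wt v)) ` {v. \<phi> v = y} = (\<lambda>w. enat (hamming_wt (D w))) ` {w. \<phi> (D w) = y}"
    unfolding fibre[symmetric] image_image by (rule refl)
  then show "quot_weight (\<phi> \<circ> D) y = quot_weight \<phi> y"
    unfolding quot_weight_def comp_apply wt by simp
qed

lemma equivp_lin_isometric: "equivp (lin_isometric :: ('a::field^'n \<Rightarrow> enat) \<Rightarrow> _)"
proof (rule equivpI)
  show "reflp (lin_isometric :: ('a^'n \<Rightarrow> enat) \<Rightarrow> _)"
    by (rule reflpI) (auto simp: lin_isometric_def lin_map_id intro: exI[of _ id])
  show "symp (lin_isometric :: ('a^'n \<Rightarrow> enat) \<Rightarrow> _)"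
  proof (rule sympI)
    fix w1 w2 :: "'a^'n \<Rightarrow> enat"
    assume "lin_isometric w1 w2"
    then obtain L where L: "lin_map L" "bij L" "w1 = w2 \<circ> L"
      unfolding lin_isometric_def by blast
    then have "w2 = w1 \<circ> inv L"
      by (simp add: fun_eq_iff bij_is_surj surj_f_inv_f)
    then show "lin_isometric w2 w1"
      unfolding lin_isometric_def using lin_map_inv[OF L(1,2)] bij_imp_bij_inv[OF L(2)] by blast
  qed
  show "transp (lin_isometric :: ('a^'n \<Rightarrow> enat) \<Rightarrow> _)"
  proof (rule transpI)
    fix w1 w2 w3 :: "'a^'n \<Rightarrow> enat"
    assume "lin_isometric w1 w2" "lin_isometric w2 w3"
    then obtain L M where "lin_map L" "bij L" "w1 = w2 \<circ> L" "lin_map M" "bij M" "w2 = w3 \<circ> M"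
      unfolding lin_isometric_def by blast
    then show "lin_isometric w1 w3"
      unfolding lin_isometric_def by (metis lin_map_compose bij_comp o_assoc)
  qed
qed

subsection \<open>Parent maps\<close>

definition parent_map :: "('a::field^'m \<Rightarrow> 'a^'n) \<Rightarrow> bool" where
  "parent_map \<phi> \<longleftrightarrow> lin_map \<phi> \<and> surj \<phi> \<and> (\<forall>x\<in>ker_map \<phi>. x \<noteq> 0 \<longrightarrow> 3 \<le> hamming_wt x)"

lemma axis_images_if_ker_map_min_wt_3:
  fixes \<phi> :: "'a::field^'m \<Rightarrow> 'a^'n"
  assumes l: "lin_map \<phi>" and min3: "\<forall>x\<in>ker_map \<phi>. x \<noteq> 0 \<longrightarrow> 3 \<le> hamming_wt x"
  shows "\<phi> (axis i 1) \<noteq> 0" and "inj (\<lambda>i. vec.span {\<phi> (axis i 1)})"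
proof
  assume "\<phi> (axis i 1) = 0"
  then have "3 \<le> hamming_wt (axis i (1::'a) :: 'a^'m)"
    using min3 by (simp add: ker_map_def axis_eq_0_iff)
  moreover have "hamming_wt (axis i (1::'a) :: 'a^'m) = 1"
    by (rule hamming_wt_axis) simp
  ultimately show False
    by simp
next
  show "inj (\<lambda>i. vec.span {\<phi> (axis i 1)})"
  proof (rule injI, rule ccontr)
    fix i j
    assume lines: "vec.span {\<phi> (axis i 1)} = vec.span {\<phi> (axis j 1)}" and "i \<noteq> j"
    have "\<phi> (axis i 1) \<in> vec.span {\<phi> (axis i 1)}"
      by (rule vec.span_base) simp
    then have "\<phi> (axis i 1) \<in> vec.span {\<phi> (axis j 1)}"
      unfolding lines .
    then obtain k where "\<phi> (axis i 1) = k *s \<phi> (axis j 1)"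
      unfolding vec.span_singleton by blast
    then have "axis i 1 + axis j (- k) \<in> ker_map \<phi>"
      using lin_map_axis[OF l, of j "- k"] unfolding ker_map_def
      by (simp add: lin_map_add[OF l] vec.scale_minus_left)
    moreover have "axis i 1 + axis j (- k) \<noteq> (0 :: 'a^'m)"
      using \<open>i \<noteq> j\<close> by (auto simp: vec_eq_iff axis_def)
    ultimately show False
      using min3 hamming_wt_axis_add_axis_le[of i 1 j "- k"] by fastforce
  qed
qed

lemma ker_map_min_wt_3_if_axis_images:
  fixes \<phi> :: "'a::field^'m \<Rightarrow> 'a^'n"
  assumes l: "lin_map \<phi>" and nz: "\<And>i. \<phi> (axis i 1) \<noteq> 0"
    and inj: "inj (\<lambda>i. vec.span {\<phi> (axis i 1)})"
  shows "\<forall>x\<in>ker_map \<phi>. x \<noteq> 0 \<longrightarrow> 3 \<le> hamming_wt x"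
proof -
  have False if x: "\<phi> x = 0" "x \<noteq> 0" "hamming_wt x \<le> 2" for x
    using x(2,3)
  proof (cases rule: hamming_wt_le_2_cases)
    case (1 i a)
    then show False
      using x(1) nz lin_map_axis[OF l, of i a] by (simp add: vec.scale_eq_0_iff)
  next
    case (2 i j a b)
    then have scaled: "a *s \<phi> (axis i 1) = (- b) *s \<phi> (axis j 1)"
      using x(1) lin_map_axis[OF l, of i a] lin_map_axis[OF l, of j b]
      by (simp add: lin_map_add[OF l] vec.scale_minus_left eq_neg_iff_add_eq_0)
    have "vec.span {\<phi> (axis i 1)} = vec.span {a *s \<phi> (axis i 1)}"
      using span_singleton_scale[OF \<open>a \<noteq> 0\<close>] by (rule sym)
    also have "\<dots> = vec.span {(- b) *s \<phi> (axis j 1)}"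
      by (simp only: scaled)
    also have "\<dots> = vec.span {\<phi> (axis j 1)}"
      using \<open>b \<noteq> 0\<close> by (intro span_singleton_scale) simp
    finally have "i = j"
      by (rule injD[OF inj])
    then show False
      using \<open>i \<noteq> j\<close> by blast
  qed
  then show ?thesis
    unfolding ker_map_def by fastforce
qed

lemma parent_map_iff_axis_images:
  "parent_map \<phi> \<longleftrightarrow> lin_map \<phi> \<and> surj \<phi> \<and> (\<forall>i. \<phi> (axis i 1) \<noteq> 0) \<and> inj (\<lambda>i. vec.span {\<phi> (axis i 1)})"
proof
  assume "parent_map \<phi>"
  then have l: "lin_map \<phi>" and "surj \<phi>" and min3: "\<forall>x\<in>ker_map \<phi>. x \<noteq> 0 \<longrightarrow> 3 \<le> hamming_wt x"
    unfolding parent_map_def by auto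
  then show "lin_map \<phi> \<and> surj \<phi> \<and> (\<forall>i. \<phi> (axis i 1) \<noteq> 0) \<and> inj (\<lambda>i. vec.span {\<phi> (axis i 1)})"
    using axis_images_if_ker_map_min_wt_3[OF l min3] by blast
next
  assume "lin_map \<phi> \<and> surj \<phi> \<and> (\<forall>i. \<phi> (axis i 1) \<noteq> 0) \<and> inj (\<lambda>i. vec.span {\<phi> (axis i 1)})"
  then have l: "lin_map \<phi>" and "surj \<phi>" and nz: "\<forall>i. \<phi> (axis i 1) \<noteq> 0"
    and inj: "inj (\<lambda>i. vec.span {\<phi> (axis i 1)})"
    by auto
  then show "parent_map \<phi>"
    unfolding parent_map_def using ker_map_min_wt_3_if_axis_images[OF l nz[rule_format] inj] by blast
qed

lemma parent_map_ker_map_in_Gr_set: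
  fixes \<phi> :: "'a::field^'m \<Rightarrow> 'a^'n"
  assumes "parent_map \<phi>"
  shows "ker_map \<phi> \<in> Gr_set (CARD('m) - CARD('n))"
proof -
  have l: "lin_map \<phi>" and "range \<phi> = UNIV"
    using assms unfolding parent_map_def by auto
  then have "vec.dim (ker_map \<phi>) + CARD('n) = CARD('m)"
    using dim_ker_map_add_dim_range[OF l] by (simp add: card_cart_basis)
  then show ?thesis
    using assms subspace_ker_map[OF l] unfolding Gr_set_def parent_map_def by auto
qed

lemma Gr_set_eq_ker_map_image:
  assumes "CARD('n) \<le> CARD('m)"
  shows "Gr_set (CARD('m) - CARD('n)) = ker_map ` {\<phi> :: 'a::field^'m \<Rightarrow> 'a^'n. parent_map \<phi>}"
proof (intro equalityI subsetI)
  fix P :: "('a^'m) set"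
  assume "P \<in> Gr_set (CARD('m) - CARD('n))"
  then have P: "vec.subspace P" "vec.dim P = CARD('m) - CARD('n)" "\<forall>x\<in>P. x \<noteq> 0 \<longrightarrow> 3 \<le> hamming_wt x"
    unfolding Gr_set_def by auto
  then obtain \<phi> :: "'a^'m \<Rightarrow> 'a^'n" where \<phi>: "lin_map \<phi>" "surj \<phi>" "ker_map \<phi> = P"
    using ex_lin_map_ker_map_eq[OF assms P(1,2)] by blast
  then have "parent_map \<phi>"
    using P(3) unfolding parent_map_def by blast
  then show "P \<in> ker_map ` {\<phi> :: 'a^'m \<Rightarrow> 'a^'n. parent_map \<phi>}"
    using \<phi>(3) by blast
next
  fix P :: "('a^'m) set"
  assume "P \<in> ker_map ` {\<phi> :: 'a^'m \<Rightarrow> 'a^'n. parent_map \<phi>}"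
  then show "P \<in> Gr_set (CARD('m) - CARD('n))"
    using parent_map_ker_map_in_Gr_set by blast
qed

lemma parent_map_iff_ker_map_in_Gr_set:
  fixes \<phi> :: "'a::field^'m \<Rightarrow> 'a^'n"
  assumes "CARD('n) \<le> CARD('m)" "lin_map \<phi>"
  shows "parent_map \<phi> \<longleftrightarrow> ker_map \<phi> \<in> Gr_set (CARD('m) - CARD('n))"
  using surj_iff_dim_ker_map[OF assms(2,1)] assms(2) parent_map_ker_map_in_Gr_set
  unfolding parent_map_def Gr_set_def by blast

subsection \<open>Parent maps and projective point families\<close>

lemma parent_function_iff:
  "parent_function \<phi> F \<longleftrightarrow> lin_map \<phi> \<and> range (\<lambda>i. vec.span {\<phi> (axis i 1)}) = (\<lambda>v. vec.span {v}) ` F"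
  unfolding parent_function_def by (simp add: full_SetCompr_eq setcompr_eq_image)

lemma parent_map_if_parent_function:
  fixes \<phi> :: "'a::field^'m \<Rightarrow> 'a^'n"
  assumes sp: "spanning_ppf F" and c: "card F = CARD('m)" and p: "parent_function \<phi> F"
  shows "parent_map \<phi>"
proof -
  let ?line = "\<lambda>i. vec.span {\<phi> (axis i 1)}"
  have l: "lin_map \<phi>" and lines: "range ?line = (\<lambda>v. vec.span {v}) ` F"
    using p unfolding parent_function_iff by blast+
  have ppf: "proj_point_family F" and "0 \<notin> F" and spF: "vec.span F = UNIV"
    using sp unfolding spanning_ppf_def proj_point_family_def by auto
  have "card (range ?line) = CARD('m)"
    using lines card_image[OF proj_point_family_inj_on_span_singleton[OF ppf]] c by simp
  then have "inj ?line"
    by (simp add: eq_card_imp_inj_on)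
  moreover have "\<phi> (axis i 1) \<noteq> 0" for i
  proof
    assume "\<phi> (axis i 1) = 0"
    moreover obtain v where "v \<in> F" "vec.span {v} = ?line i"
      using lines by (metis (no_types, lifting) imageE rangeI)
    ultimately have "v \<in> F" "v \<in> vec.span {0}"
      using vec.span_base[of v "{v}"] by auto
    then show False
      using \<open>0 \<notin> F\<close> by (simp add: vec.span_singleton)
  qed
  moreover have "surj \<phi>"
  proof -
    have "v \<in> range \<phi>" if "v \<in> F" for v
    proof -
      obtain i where "vec.span {v} = ?line i"
        using lines \<open>v \<in> F\<close> by (metis (no_types, lifting) imageI rangeE)
      then have "v \<in> \<phi> ` vec.span {axis i 1}"
        using vec.span_base[of v "{v}"] lin_map_span_image[OF l, of "{axis i 1}"] by simp
      then show ?thesis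
        by blast
    qed
    then have "vec.span F \<subseteq> range \<phi>"
      using vec.span_minimal[OF _ subspace_range[OF l]] by blast
    then show ?thesis
      using spF by auto
  qed
  ultimately show ?thesis
    unfolding parent_map_iff_axis_images using l by blast
qed

lemma spanning_ppf_range_axis:
  fixes \<phi> :: "'a::field^'m \<Rightarrow> 'a^'n"
  assumes "parent_map \<phi>"
  defines "F \<equiv> range (\<lambda>i. \<phi> (axis i 1))"
  shows "spanning_ppf F" "card F = CARD('m)" "parent_function \<phi> F"
proof -
  have l: "lin_map \<phi>" and s: "surj \<phi>"
    and nz: "\<And>i. \<phi> (axis i 1) \<noteq> 0" and inj: "inj (\<lambda>i. vec.span {\<phi> (axis i 1)})"
    using assms(1) unfolding parent_map_iff_axis_images by blast+
  have "inj (\<lambda>i. \<phi> (axis i 1))"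
    using inj by (auto simp: inj_def)
  then show "card F = CARD('m)"
    unfolding F_def by (simp add: card_image)
  have "vec.independent {u, v}" if uv: "u \<in> F" "v \<in> F" "u \<noteq> v" for u v
  proof -
    obtain i j where ij: "u = \<phi> (axis i 1)" "v = \<phi> (axis j 1)"
      using uv(1,2) unfolding F_def by blast
    then have "i \<noteq> j"
      using uv(3) by blast
    then have "vec.span {u} \<noteq> vec.span {v}"
      using inj unfolding inj_def ij by blast
    then show ?thesis
      using independent_pair_iff_span_singleton_ne uv(3) nz ij by blast
  qed
  moreover have "F = \<phi> ` cart_basis"
    unfolding F_def cart_basis_def by auto
  then have "vec.span F = UNIV"
    using lin_map_span_image[OF l, of cart_basis] s by (simp add: span_cart_basis)
  ultimately show "spanning_ppf F"
    unfolding spanning_ppf_def proj_point_family_def F_def using nz by auto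
  show "parent_function \<phi> F"
    unfolding parent_function_iff F_def image_image using l by simp
qed

lemma ex_parent_function:
  fixes F :: "('a::field^'n) set"
  assumes "finite F" "card F = CARD('m)"
  shows "\<exists>\<phi> :: 'a^'m \<Rightarrow> 'a^'n. parent_function \<phi> F"
proof -
  obtain g :: "'m \<Rightarrow> 'a^'n" where g: "range g = F"
    using finite_same_card_bij[of "UNIV :: 'm set" F] assms by (auto simp: bij_betw_def)
  define A :: "'a^'m^'n" where "A = (\<chi> r c. g c $ r)"
  have "A *v axis i 1 = g i" for i
    unfolding A_def by (simp add: matrix_vector_mult_def axis_def vec_eq_iff if_distrib cong: if_cong)
  then have "parent_function ((*v) A) F"
    unfolding parent_function_iff g[symmetric] image_image using lin_map_matrix_vector_mult by simp
  then show ?thesis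
    by blast
qed

lemma span_image_axis_support:
  fixes w :: "'a::field^'m"
  assumes "w \<in> vec.span ((\<lambda>i. axis i 1) ` S)"
  shows "{k. w $ k \<noteq> 0} \<subseteq> S"
proof -
  have "vec.subspace {w :: 'a^'m. \<forall>k. k \<notin> S \<longrightarrow> w $ k = 0}"
    unfolding vec.subspace_def by auto
  then have "vec.span ((\<lambda>i. axis i 1) ` S) \<subseteq> {w :: 'a^'m. \<forall>k. k \<notin> S \<longrightarrow> w $ k = 0}"
    by (rule vec.span_minimal[rotated]) (auto simp: axis_def)
  then show ?thesis
    using assms by blast
qed

lemma quot_weight_le_proj_weight:
  fixes \<phi> :: "'a::field^'m \<Rightarrow> 'a^'n"
  assumes l: "lin_map \<phi>" and fin: "finite F"
    and lines: "\<And>v. v \<in> F \<Longrightarrow> \<exists>i. vec.span {v} = vec.span {\<phi> (axis i 1)}"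
  shows "quot_weight \<phi> y \<le> proj_weight F y"
  unfolding proj_weight_def
proof (rule INF_greatest, clarify)
  fix I assume I: "I \<subseteq> F" "y \<in> vec.span I"
  have "\<forall>v\<in>F. \<exists>i. vec.span {v} = vec.span {\<phi> (axis i 1)}"
    using lines by blast
  then obtain \<tau> where \<tau>: "\<forall>v\<in>F. vec.span {v} = vec.span {\<phi> (axis (\<tau> v) 1)}"
    by (rule bchoice[THEN exE])
  let ?S = "\<tau> ` I"
  have "I \<subseteq> vec.span (\<phi> ` (\<lambda>i. axis i 1) ` ?S)"
  proof
    fix v
    assume "v \<in> I"
    have "v \<in> vec.span {v}"
      by (rule vec.span_base) simp
    also have "\<dots> = vec.span {\<phi> (axis (\<tau> v) 1)}"
      using \<tau> I(1) \<open>v \<in> I\<close> by blast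
    also have "\<dots> \<subseteq> vec.span (\<phi> ` (\<lambda>i. axis i 1) ` ?S)"
      using \<open>v \<in> I\<close> by (intro vec.span_mono) auto
    finally show "v \<in> vec.span (\<phi> ` (\<lambda>i. axis i 1) ` ?S)" .
  qed
  then have "vec.span I \<subseteq> \<phi> ` vec.span ((\<lambda>i. axis i 1) ` ?S)"
    unfolding lin_map_span_image[OF l, symmetric] by (rule vec.span_minimal[OF _ vec.subspace_span])
  then obtain w where w: "w \<in> vec.span ((\<lambda>i. axis i 1) ` ?S)" "\<phi> w = y"
    using I(2) by blast
  have "finite I"
    using finite_subset[OF I(1) fin] .
  have "hamming_wt w \<le> card ?S"
    unfolding hamming_wt_def using span_image_axis_support[OF w(1)] \<open>finite I\<close>
    by (intro card_mono) auto
  also have "\<dots> \<le> card I"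
    using \<open>finite I\<close> by (rule card_image_le)
  finally have "enat (hamming_wt w) \<le> enat (card I)"
    by simp
  with quot_weight_le[of \<phi> w y, OF w(2)] show "quot_weight \<phi> y \<le> enat (card I)"
    by (rule order_trans)
qed

lemma proj_weight_le_quot_weight:
  fixes \<phi> :: "'a::field^'m \<Rightarrow> 'a^'n"
  assumes l: "lin_map \<phi>" and lines: "\<And>i. \<exists>v\<in>F. vec.span {\<phi> (axis i 1)} = vec.span {v}"
  shows "proj_weight F y \<le> quot_weight \<phi> y"
  unfolding quot_weight_def
proof (rule INF_greatest)
  fix w assume "w \<in> {w. \<phi> w = y}"
  then have w: "\<phi> w = y"
    by simp
  have "\<forall>i. \<exists>v. v \<in> F \<and> vec.span {\<phi> (axis i 1)} = vec.span {v}"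
    using lines by blast
  then obtain \<rho> where \<rho>: "\<forall>i. \<rho> i \<in> F \<and> vec.span {\<phi> (axis i 1)} = vec.span {\<rho> i}"
    by (rule choice[THEN exE])
  let ?I = "\<rho> ` {k. w $ k \<noteq> 0}"
  have "w $ i *s \<phi> (axis i 1) \<in> vec.span ?I" for i
  proof (cases "w $ i = 0")
    case False
    have "\<phi> (axis i 1) \<in> vec.span {\<phi> (axis i 1)}"
      by (rule vec.span_base) simp
    also have "\<dots> = vec.span {\<rho> i}"
      using \<rho> by blast
    also have "\<dots> \<subseteq> vec.span ?I"
      using False by (intro vec.span_mono) auto
    finally show ?thesis
      by (rule vec.span_scale)
  qed (simp add: vec.span_zero)
  then have "y \<in> vec.span ?I"
    unfolding w[symmetric] lin_map_expand[OF l, of w] by (rule vec.span_sum)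
  moreover have "?I \<subseteq> F"
    using \<rho> by blast
  ultimately have "proj_weight F y \<le> enat (card ?I)"
    unfolding proj_weight_def by (intro INF_lower) simp
  moreover have "card ?I \<le> hamming_wt w"
    unfolding hamming_wt_def by (rule card_image_le) simp
  ultimately show "proj_weight F y \<le> enat (hamming_wt w)"
    by (simp add: order_trans)
qed

lemma proj_weight_eq_quot_weight:
  assumes "finite F" "parent_function \<phi> F"
  shows "proj_weight F = quot_weight \<phi>"
proof
  fix y
  let ?line = "\<lambda>i. vec.span {\<phi> (axis i 1)}"
  have l: "lin_map \<phi>" and lines: "range ?line = (\<lambda>v. vec.span {v}) ` F"
    using assms(2) unfolding parent_function_iff by blast+
  have "\<exists>i. vec.span {v} = ?line i" if "v \<in> F" for v
  proof -
    have "vec.span {v} \<in> range ?line"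
      using lines that by blast
    then show ?thesis
      by auto
  qed
  moreover have "\<exists>v\<in>F. ?line i = vec.span {v}" for i
  proof -
    have "?line i \<in> (\<lambda>v. vec.span {v}) ` F"
      using lines by blast
    then show ?thesis
      by auto
  qed
  ultimately show "proj_weight F y = quot_weight \<phi> y"
    using quot_weight_le_proj_weight[OF l assms(1)] proj_weight_le_quot_weight[OF l]
    by (blast intro: antisym)
qed

lemma Pr_set_eq_quot_weight_image:
  "Pr_set CARD('m) = quot_weight ` {\<phi> :: 'a::field^'m \<Rightarrow> 'a^'n. parent_map \<phi>}"
proof (intro equalityI subsetI)
  fix w :: "'a^'n \<Rightarrow> enat"
  assume "w \<in> Pr_set CARD('m)"
  then obtain F where F: "w = proj_weight F" "spanning_ppf F" "card F = CARD('m)"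
    unfolding Pr_set_def by blast
  then have "finite F"
    unfolding spanning_ppf_def proj_point_family_def by blast
  then obtain \<phi> :: "'a^'m \<Rightarrow> 'a^'n" where "parent_function \<phi> F"
    using ex_parent_function F(3) by blast
  then have "parent_map \<phi>" "w = quot_weight \<phi>"
    using parent_map_if_parent_function proj_weight_eq_quot_weight F \<open>finite F\<close> by blast+
  then show "w \<in> quot_weight ` {\<phi> :: 'a^'m \<Rightarrow> 'a^'n. parent_map \<phi>}"
    by blast
next
  fix w :: "'a^'n \<Rightarrow> enat"
  assume "w \<in> quot_weight ` {\<phi> :: 'a^'m \<Rightarrow> 'a^'n. parent_map \<phi>}"
  then obtain \<phi> :: "'a^'m \<Rightarrow> 'a^'n" where "parent_map \<phi>" "w = quot_weight \<phi>"
    by blast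
  moreover let ?F = "range (\<lambda>i. \<phi> (axis i 1))"
  have "finite ?F"
    by simp
  ultimately show "w \<in> Pr_set CARD('m)"
    using spanning_ppf_range_axis[of \<phi>] proj_weight_eq_quot_weight[of ?F \<phi>]
    unfolding Pr_set_def by (intro CollectI exI[of _ ?F]) auto
qed

subsection \<open>Linear isometry of quotient weights versus Hamming equivalence of kernels\<close>

lemma lin_isometric_quot_weight_if_ker_map_eq:
  fixes \<phi>1 \<phi>2 :: "'a::field^'m \<Rightarrow> 'a^'n"
  assumes "lin_map \<phi>1" "surj \<phi>1" "lin_map \<phi>2" "surj \<phi>2" "ker_map \<phi>1 = ker_map \<phi>2"
  shows "lin_isometric (quot_weight \<phi>1) (quot_weight \<phi>2)"
proof -
  obtain L where L: "lin_map L" "bij L" "\<phi>2 = L \<circ> \<phi>1"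
    using ex_lin_bij_factor_if_ker_map_eq[OF assms] by blast
  have "quot_weight \<phi>2 (L y) = quot_weight \<phi>1 y" for y
    unfolding L(3) by (rule quot_weight_comp_inj[OF bij_is_inj[OF L(2)]])
  then have "quot_weight \<phi>1 = quot_weight \<phi>2 \<circ> L"
    by (simp add: fun_eq_iff)
  then show ?thesis
    unfolding lin_isometric_def using L by blast
qed

lemma lin_isometric_quot_weight_if_hamming_equiv:
  fixes \<phi>1 \<phi>2 :: "'a::field^'m \<Rightarrow> 'a^'n"
  assumes l1: "lin_map \<phi>1" "surj \<phi>1" and l2: "lin_map \<phi>2" "surj \<phi>2"
    and "hamming_equiv (ker_map \<phi>1) (ker_map \<phi>2)"
  shows "lin_isometric (quot_weight \<phi>1) (quot_weight \<phi>2)"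
proof -
  obtain D where D: "hamming_isometry D" "D ` ker_map \<phi>1 = ker_map \<phi>2"
    using assms(5) unfolding hamming_equiv_iff by blast
  have b: "bij D"
    using hamming_isometry_bij[OF D(1)] .
  have "(\<phi>2 \<circ> D) x = 0 \<longleftrightarrow> x \<in> ker_map \<phi>1" for x
  proof -
    have "(\<phi>2 \<circ> D) x = 0 \<longleftrightarrow> D x \<in> D ` ker_map \<phi>1"
      unfolding D(2) by (simp add: ker_map_def)
    also have "\<dots> \<longleftrightarrow> x \<in> ker_map \<phi>1"
      using bij_is_inj[OF b] by (rule inj_image_mem_iff)
    finally show ?thesis .
  qed
  then have "ker_map (\<phi>2 \<circ> D) = ker_map \<phi>1"
    unfolding ker_map_def by blast
  moreover have "lin_map (\<phi>2 \<circ> D)"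
    using D(1) l2(1) unfolding hamming_isometry_def by (simp add: lin_map_compose)
  moreover have "surj (\<phi>2 \<circ> D)"
    using comp_surj[OF bij_is_surj[OF b] l2(2)] .
  ultimately have "lin_isometric (quot_weight \<phi>1) (quot_weight (\<phi>2 \<circ> D))"
    using lin_isometric_quot_weight_if_ker_map_eq[OF l1] by simp
  then show ?thesis
    using quot_weight_comp_hamming_isometry[OF D(1)] by metis
qed

lemma lin_isometry_permutes_axis_lines:
  fixes \<phi>1 \<phi>2 :: "'a::field^'m \<Rightarrow> 'a^'n"
  assumes p1: "parent_map \<phi>1" and p2: "parent_map \<phi>2"
    and L: "lin_map L" "bij L" "\<And>y. quot_weight \<phi>1 y = quot_weight \<phi>2 (L y)"
  obtains \<sigma> c where "bij \<sigma>" "\<And>i. c i \<noteq> 0" "\<And>i. L (\<phi>1 (axis i 1)) = \<phi>2 (axis (\<sigma> i) (c i))"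
proof -
  have l1: "lin_map \<phi>1" and nz1: "\<And>i. \<phi>1 (axis i 1) \<noteq> 0"
    and inj1: "inj (\<lambda>i. vec.span {\<phi>1 (axis i 1)})"
    using p1 unfolding parent_map_iff_axis_images by blast+
  have l2: "lin_map \<phi>2" and nz2: "\<And>i. \<phi>2 (axis i 1) \<noteq> 0"
    using p2 unfolding parent_map_iff_axis_images by blast+
  have "\<exists>j c. c \<noteq> 0 \<and> L (\<phi>1 (axis i 1)) = \<phi>2 (axis j c)" for i
  proof -
    have "quot_weight \<phi>1 (\<phi>1 (axis i 1)) = 1"
      unfolding quot_weight_eq_1_iff[OF l1 nz1] by (intro exI[of _ i] exI[of _ 1]) simp
    then show ?thesis
      using quot_weight_eq_1_iff[OF l2 nz2] L(3) by simp
  qed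
  then obtain \<sigma> c where c: "\<And>i. c i \<noteq> 0" and \<sigma>: "\<And>i. L (\<phi>1 (axis i 1)) = \<phi>2 (axis (\<sigma> i) (c i))"
    by metis
  have lines: "L ` vec.span {\<phi>1 (axis i 1)} = vec.span {\<phi>2 (axis (\<sigma> i) 1)}" for i
  proof -
    have "L ` vec.span {\<phi>1 (axis i 1)} = vec.span {L (\<phi>1 (axis i 1))}"
      using lin_map_span_image[OF L(1), of "{\<phi>1 (axis i 1)}"] by simp
    also have "\<dots> = vec.span {\<phi>2 (axis (\<sigma> i) 1)}"
      using \<sigma> lin_map_axis[OF l2, of "\<sigma> i" "c i"] span_singleton_scale[OF c] by simp
    finally show ?thesis .
  qed
  have "inj \<sigma>"
  proof (rule injI)
    fix i i'
    assume "\<sigma> i = \<sigma> i'"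
    then have "L ` vec.span {\<phi>1 (axis i 1)} = L ` vec.span {\<phi>1 (axis i' 1)}"
      by (simp add: lines)
    then have "vec.span {\<phi>1 (axis i 1)} = vec.span {\<phi>1 (axis i' 1)}"
      using bij_is_inj[OF L(2)] by (simp add: inj_image_eq_iff)
    then show "i = i'"
      by (rule injD[OF inj1])
  qed
  then have "bij \<sigma>"
    by (simp add: bij_def finite_UNIV_inj_surj)
  then show thesis
    using that c \<sigma> by blast
qed

lemma image_ker_map_eq_if_comp_eq:
  fixes \<phi>1 \<phi>2 :: "'a::field^'m \<Rightarrow> 'a^'n"
  assumes "lin_map L" "inj L" "surj D" "L \<circ> \<phi>1 = \<phi>2 \<circ> D"
  shows "D ` ker_map \<phi>1 = ker_map \<phi>2"
proof -
  have L0: "L y = 0 \<longleftrightarrow> y = 0" for y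
    using inj_eq[OF assms(2), of y 0] lin_map_0[OF assms(1)] by simp
  have "L (\<phi>1 x) = \<phi>2 (D x)" for x
    using fun_cong[OF assms(4), of x] by simp
  then have "\<phi>1 x = 0 \<longleftrightarrow> \<phi>2 (D x) = 0" for x
    using L0 by metis
  then have "ker_map \<phi>1 = D -` ker_map \<phi>2"
    unfolding ker_map_def by auto
  then show ?thesis
    using surj_image_vimage_eq[OF assms(3)] by simp
qed

lemma hamming_equiv_ker_map_if_lin_isometric:
  fixes \<phi>1 \<phi>2 :: "'a::field^'m \<Rightarrow> 'a^'n"
  assumes p1: "parent_map \<phi>1" and p2: "parent_map \<phi>2"
    and "lin_isometric (quot_weight \<phi>1) (quot_weight \<phi>2)"
  shows "hamming_equiv (ker_map \<phi>1) (ker_map \<phi>2)"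
proof -
  obtain L where L: "lin_map L" "bij L" "\<And>y. quot_weight \<phi>1 y = quot_weight \<phi>2 (L y)"
    using assms(3) unfolding lin_isometric_def by (auto simp: fun_eq_iff)
  obtain \<sigma> c where \<sigma>: "bij \<sigma>" and c: "\<And>i. c i \<noteq> 0"
    and axis: "\<And>i. L (\<phi>1 (axis i 1)) = \<phi>2 (axis (\<sigma> i) (c i))"
    using lin_isometry_permutes_axis_lines[OF p1 p2 L] by blast
  let ?D = "monomial_map \<sigma> c"
  have D: "hamming_isometry ?D"
    using hamming_isometry_monomial_map[OF \<sigma> c] .
  have "L \<circ> \<phi>1 = \<phi>2 \<circ> ?D"
  proof (rule lin_map_eqI_axis)
    show "lin_map (L \<circ> \<phi>1)" "lin_map (\<phi>2 \<circ> ?D)"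
      using D L(1) p1 p2 unfolding hamming_isometry_def parent_map_def by (simp_all add: lin_map_compose)
    show "(L \<circ> \<phi>1) (axis i 1) = (\<phi>2 \<circ> ?D) (axis i 1)" for i
      by (simp add: axis monomial_map_axis[OF \<sigma>])
  qed
  then have "?D ` ker_map \<phi>1 = ker_map \<phi>2"
    using image_ker_map_eq_if_comp_eq L(1) bij_is_inj[OF L(2)] bij_is_surj[OF hamming_isometry_bij[OF D]]
    by blast
  then show ?thesis
    unfolding hamming_equiv_iff using D by blast
qed

lemma Pr_class_eq_iff_Gr_class_eq:
  fixes \<phi>1 \<phi>2 :: "'a::field^'m \<Rightarrow> 'a^'n"
  assumes p1: "parent_map \<phi>1" and p2: "parent_map \<phi>2"
  shows "Pr_class CARD('m) (quot_weight \<phi>1) = Pr_class CARD('m) (quot_weight \<phi>2)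
    \<longleftrightarrow> Gr_class (CARD('m) - CARD('n)) (ker_map \<phi>1) = Gr_class (CARD('m) - CARD('n)) (ker_map \<phi>2)"
proof -
  have "quot_weight \<phi>2 \<in> Pr_set CARD('m)"
    using p2 Pr_set_eq_quot_weight_image by blast
  then have "Pr_class CARD('m) (quot_weight \<phi>1) = Pr_class CARD('m) (quot_weight \<phi>2)
      \<longleftrightarrow> lin_isometric (quot_weight \<phi>1) (quot_weight \<phi>2)"
    unfolding Pr_class_def by (rule eq_related_Collect_iff[OF equivp_lin_isometric])
  also have "\<dots> \<longleftrightarrow> hamming_equiv (ker_map \<phi>1) (ker_map \<phi>2)"
  proof
    show "hamming_equiv (ker_map \<phi>1) (ker_map \<phi>2)" if "lin_isometric (quot_weight \<phi>1) (quot_weight \<phi>2)"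
      using p1 p2 that by (rule hamming_equiv_ker_map_if_lin_isometric)
    have "lin_map \<phi>1" "surj \<phi>1" "lin_map \<phi>2" "surj \<phi>2"
      using p1 p2 unfolding parent_map_def by auto
    then show "lin_isometric (quot_weight \<phi>1) (quot_weight \<phi>2)" if "hamming_equiv (ker_map \<phi>1) (ker_map \<phi>2)"
      using that by (rule lin_isometric_quot_weight_if_hamming_equiv)
  qed
  also have "\<dots> \<longleftrightarrow> Gr_class (CARD('m) - CARD('n)) (ker_map \<phi>1) = Gr_class (CARD('m) - CARD('n)) (ker_map \<phi>2)"
    unfolding Gr_class_def
    by (rule eq_related_Collect_iff[OF equivp_hamming_equiv parent_map_ker_map_in_Gr_set[OF p2], symmetric])
  finally show ?thesis .
qed

lemma Pr_bar_eq_image_parent_map: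
  "Pr_bar CARD('m) = (\<lambda>\<phi>. Pr_class CARD('m) (quot_weight \<phi>)) ` {\<phi> :: 'a::field^'m \<Rightarrow> 'a^'n. parent_map \<phi>}"
  unfolding Pr_bar_def Pr_set_eq_quot_weight_image image_image ..

lemma Gr_bar_eq_image_parent_map:
  assumes "CARD('n) \<le> CARD('m)"
  shows "Gr_bar (CARD('m) - CARD('n))
    = (\<lambda>\<phi>. Gr_class (CARD('m) - CARD('n)) (ker_map \<phi>)) ` {\<phi> :: 'a::field^'m \<Rightarrow> 'a^'n. parent_map \<phi>}"
  unfolding Gr_bar_def Gr_set_eq_ker_map_image[OF assms] image_image ..

lemma ex_bij_betw_Pr_bar_Gr_bar:
  assumes "CARD('n) \<le> CARD('m)"
  shows "\<exists>\<Psi>. (\<forall>\<phi> :: 'a::field^'m \<Rightarrow> 'a^'n. parent_map \<phi> \<longrightarrow>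
      \<Psi> (Pr_class CARD('m) (quot_weight \<phi>)) = Gr_class (CARD('m) - CARD('n)) (ker_map \<phi>))
    \<and> bij_betw \<Psi> (Pr_bar CARD('m)) (Gr_bar (CARD('m) - CARD('n)))"
proof -
  let ?A = "{\<phi> :: 'a^'m \<Rightarrow> 'a^'n. parent_map \<phi>}"
  let ?Pr = "\<lambda>\<phi>. Pr_class CARD('m) (quot_weight \<phi>)"
  let ?Gr = "\<lambda>\<phi>. Gr_class (CARD('m) - CARD('n)) (ker_map \<phi>)"
  have "?Pr \<phi>1 = ?Pr \<phi>2 \<longleftrightarrow> ?Gr \<phi>1 = ?Gr \<phi>2" if "\<phi>1 \<in> ?A" "\<phi>2 \<in> ?A" for \<phi>1 \<phi>2
    using that Pr_class_eq_iff_Gr_class_eq by simp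
  then have "\<exists>\<Psi>. (\<forall>\<phi>\<in>?A. \<Psi> (?Pr \<phi>) = ?Gr \<phi>) \<and> bij_betw \<Psi> (?Pr ` ?A) (?Gr ` ?A)"
    by (rule ex_bij_betw_induced)
  then show ?thesis
    unfolding Pr_bar_eq_image_parent_map Gr_bar_eq_image_parent_map[OF assms] by simp
qed

theorem proposition4p2:
  assumes "CARD('n) \<le> CARD('m)"
  shows "\<exists>\<Psi> :: ('a::{field,finite}^'n \<Rightarrow> enat) set \<Rightarrow> ('a^'m) set set.
     (\<forall>F (\<phi>::'a^'m \<Rightarrow> 'a^'n). spanning_ppf F \<and> card F = CARD('m) \<and> parent_function \<phi> F \<longrightarrow>
         ker_map \<phi> \<in> Gr_set (CARD('m) - CARD('n)) \<and>
         \<Psi> (Pr_class CARD('m) (proj_weight F)) = Gr_class (CARD('m) - CARD('n)) (ker_map \<phi>))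
   \<and> bij_betw \<Psi> (Pr_bar CARD('m)) (Gr_bar (CARD('m) - CARD('n)))
   \<and> (\<forall>P \<in> Gr_set (CARD('m) - CARD('n)). \<forall>\<phi>::'a^'m \<Rightarrow> 'a^'n. lin_map \<phi> \<and> ker_map \<phi> = P \<longrightarrow>
         the_inv_into (Pr_bar CARD('m)) \<Psi> (Gr_class (CARD('m) - CARD('n)) P)
           = Pr_class CARD('m) (quot_weight \<phi>))"
proof -
  let ?k = "CARD('m) - CARD('n)"
  obtain \<Psi> where \<Psi>: "\<And>\<phi> :: 'a^'m \<Rightarrow> 'a^'n. parent_map \<phi> \<Longrightarrow>
      \<Psi> (Pr_class CARD('m) (quot_weight \<phi>)) = Gr_class ?k (ker_map \<phi>)"
    and bij: "bij_betw \<Psi> (Pr_bar CARD('m)) (Gr_bar ?k)"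
    using ex_bij_betw_Pr_bar_Gr_bar[OF assms] by blast
  show ?thesis
  proof (intro exI conjI allI impI ballI)
    fix F and \<phi> :: "'a^'m \<Rightarrow> 'a^'n"
    assume F: "spanning_ppf F \<and> card F = CARD('m) \<and> parent_function \<phi> F"
    then have "finite F"
      unfolding spanning_ppf_def proj_point_family_def by blast
    then have "parent_map \<phi>" "proj_weight F = quot_weight \<phi>"
      using F parent_map_if_parent_function proj_weight_eq_quot_weight by blast+
    then show "ker_map \<phi> \<in> Gr_set ?k" "\<Psi> (Pr_class CARD('m) (proj_weight F)) = Gr_class ?k (ker_map \<phi>)"
      using parent_map_ker_map_in_Gr_set \<Psi> by simp_all
  next
    fix P and \<phi> :: "'a^'m \<Rightarrow> 'a^'n"
    assume "P \<in> Gr_set ?k" "lin_map \<phi> \<and> ker_map \<phi> = P"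
    then have "parent_map \<phi>" "ker_map \<phi> = P"
      using parent_map_iff_ker_map_in_Gr_set[OF assms] by auto
    then show "the_inv_into (Pr_bar CARD('m)) \<Psi> (Gr_class ?k P) = Pr_class CARD('m) (quot_weight \<phi>)"
      using \<Psi> Pr_bar_eq_image_parent_map
      by (intro the_inv_into_f_eq[OF bij_betw_imp_inj_on[OF bij]]) auto
  qed (rule bij)
qed

end
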